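(* Let $n\ge 1$, $N\ge 2$ even, $m>0$, and let $D_m=-\mathrm{i}\sum_{j=1}^n\alpha^j\partial_{x^j}+m\beta$ be a Dirac operator on $\mathbb{R}^n$ with $N\times N$ self-adjoint, mutually anticommuting matrices $\alpha^1,\dots,\alpha^n,\beta$ satisfying $(\alpha^j)^2=\beta^2=1_N$. Let $\bm{K}:\mathbb{C}^N\to\mathbb{C}^N$ denote complex conjugation, and let $B\in\mathrm{End}(\mathbb{C}^N)$ satisfy $$\{B\bm{K},D_m\}=0,\qquad B\bm{K}=\bm{K}B^\ast,\qquad B^\ast B=1_N.$$ For $\psi\in L^2(\mathbb{R}^n,\mathbb{C}^N)$ define $$Q(\psi)=\int_{\mathbb{R}^n}\psi(x)^\ast\psi(x)\,dx,\qquad \Lambda(\psi)=\int_{\mathbb{R}^n}\psi(x)^\ast B\bm{K}\psi(x)\,dx.$$ Let $a,b\in\mathbb{C}$ with $|a|^2-|b|^2=1$, and set $g=a+bB\bm{K}$ (acting pointwise, $g\psi=a\psi+bB\overline{\psi}$). Then for every $\psi\in L^2(\mathbb{R}^n,\mathbb{C}^N)$, $$Q(g\psi)=(|a|^2+|b|^2)Q(\psi)+2\,\mathrm{Re}\{\bar a b\,\Lambda(\psi)\},$$ $$\Lambda(g\psi)=\bar a^2\Lambda(\psi)+2\bar a\bar b\,Q(\psi)+\bar b^2\,\overline{\Lambda(\psi)},$$ and consequently $$Q(g\psi)^2-|\Lambda(g\psi)|^2=Q(\psi)^2-|\Lambda(\psi)|^2.$$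
   Context: $\{X,Y\}=XY+YX$ denotes the anticommutator; $\psi^\ast$ is the hermitian conjugate. The set of operators $a+bB\bm{K}$ with $|a|^2-|b|^2=1$ is called the Bogoliubov group. *)

theory Defs
  imports "HOL-Analysis.Analysis"
begin

definition vconj :: "complex ^ 'N \<Rightarrow> complex ^ 'N" where
  "vconj v = (\<chi> i. cnj (v $ i))"

definition cadj :: "complex ^ 'N ^ 'N \<Rightarrow> complex ^ 'N ^ 'N" where
  "cadj A = (\<chi> i j. cnj (A $ j $ i))"

definition cinner :: "complex ^ 'N \<Rightarrow> complex ^ 'N \<Rightarrow> complex" where
  "cinner u v = (\<Sum>i\<in>UNIV. cnj (u $ i) * v $ i)"

definition BK :: "complex ^ 'N ^ 'N \<Rightarrow> ('x \<Rightarrow> complex ^ 'N) \<Rightarrow> ('x \<Rightarrow> complex ^ 'N)" where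
  "BK B \<psi> = (\<lambda>x. B *v vconj (\<psi> x))"

definition dirac :: "('n::finite \<Rightarrow> complex ^ 'N ^ 'N) \<Rightarrow> complex ^ 'N ^ 'N \<Rightarrow> real
      \<Rightarrow> (real ^ 'n \<Rightarrow> complex ^ 'N) \<Rightarrow> (real ^ 'n \<Rightarrow> complex ^ 'N)" where
  "dirac \<alpha> \<beta> m \<psi> = (\<lambda>x. (- \<i>) *s (\<Sum>j\<in>UNIV. \<alpha> j *v frechet_derivative \<psi> (at x) (axis j 1))
                          + complex_of_real m *s (\<beta> *v \<psi> x))"

definition L2 :: "(real ^ 'n::finite \<Rightarrow> complex ^ 'N) \<Rightarrow> bool" where
  "L2 \<psi> \<longleftrightarrow> \<psi> \<in> borel_measurable lborel \<and> integrable lborel (\<lambda>x. (norm (\<psi> x))\<^sup>2)"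

definition Qf :: "(real ^ 'n::finite \<Rightarrow> complex ^ 'N) \<Rightarrow> complex" where
  "Qf \<psi> = (LINT x|lborel. cinner (\<psi> x) (\<psi> x))"

definition Lam :: "complex ^ 'N ^ 'N \<Rightarrow> (real ^ 'n::finite \<Rightarrow> complex ^ 'N) \<Rightarrow> complex" where
  "Lam B \<psi> = (LINT x|lborel. cinner (\<psi> x) (BK B \<psi> x))"

definition bog :: "complex \<Rightarrow> complex \<Rightarrow> complex ^ 'N ^ 'N \<Rightarrow> ('x \<Rightarrow> complex ^ 'N) \<Rightarrow> ('x \<Rightarrow> complex ^ 'N)" where
  "bog a b B \<psi> = (\<lambda>x. a *s \<psi> x + b *s BK B \<psi> x)"

end

theory Submission
  imports Defs
begin

text \<open>Only unitarity of \<open>B\<close> and \<open>B K = K B\<^sup>*\<close> matter: they make \<open>B K\<close> an antiunitary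
involution, \<open>\<langle>B K u, B K v\<rangle> = \<langle>v, u\<rangle>\<close> and \<open>(B K)\<^sup>2 = 1\<close>. Expanding the sesquilinear forms
pointwise then gives the transformation rules for \<open>Q\<close> and \<open>\<Lambda>\<close>, and these rules multiply
\<open>Q\<^sup>2 - |\<Lambda>|\<^sup>2\<close> by \<open>(|a|\<^sup>2 - |b|\<^sup>2)\<^sup>2 = 1\<close>.\<close>

lemma cinner_matrix_left: "cinner (A *v u) v = cinner u (cadj A *v v)"
proof -
  have "cinner (A *v u) v = (\<Sum>i\<in>UNIV. \<Sum>j\<in>UNIV. cnj (A$i$j) * cnj (u$j) * v$i)"
    unfolding cinner_def matrix_vector_mult_def by (simp add: sum_distrib_right)
  also have "\<dots> = (\<Sum>j\<in>UNIV. \<Sum>i\<in>UNIV. cnj (A$i$j) * cnj (u$j) * v$i)"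
    by (rule sum.swap)
  also have "\<dots> = cinner u (cadj A *v v)"
    unfolding cinner_def matrix_vector_mult_def cadj_def
    by (simp add: sum_distrib_left mult_ac)
  finally show ?thesis .
qed

lemma vconj_vconj [simp]: "vconj (vconj v) = v"
  unfolding vconj_def by (simp add: vec_eq_iff)

lemma cinner_vconj: "cinner (vconj u) (vconj v) = cnj (cinner u v)"
  unfolding cinner_def vconj_def by simp

lemma cinner_commute: "cinner v u = cnj (cinner u v)"
  unfolding cinner_def by (simp add: mult_ac)

lemma cinner_self_eq_norm: "cinner v v = complex_of_real ((norm v)\<^sup>2)"
proof -
  have "(norm v)\<^sup>2 = (\<Sum>i\<in>UNIV. (cmod (v$i))\<^sup>2)"
    unfolding norm_vec_def L2_set_def by (simp add: sum_nonneg)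
  moreover have "cnj (v$i) * v$i = complex_of_real ((cmod (v$i))\<^sup>2)" for i
    by (metis complex_norm_square mult.commute)
  ultimately show ?thesis unfolding cinner_def by simp
qed

lemma cinner_add_scalar_left:
  "cinner (a *s u + b *s v) w = cnj a * cinner u w + cnj b * cinner v w"
  unfolding cinner_def by (simp add: algebra_simps sum.distrib sum_distrib_left)

lemma cinner_add_scalar_right:
  "cinner w (a *s u + b *s v) = a * cinner w u + b * cinner w v"
  unfolding cinner_def by (simp add: algebra_simps sum.distrib sum_distrib_left)

lemma matrix_vconj_add_scalar:
  "B *v vconj (a *s u + b *s v) = cnj a *s (B *v vconj u) + cnj b *s (B *v vconj v)"
  unfolding vconj_def matrix_vector_mult_def
  by (simp add: vec_eq_iff algebra_simps sum.distrib sum_distrib_left)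

lemma cinner_antiunitary:
  assumes "cadj B ** B = mat 1"
  shows "cinner (B *v vconj u) (B *v vconj v) = cinner v u"
proof -
  have "cinner (B *v vconj u) (B *v vconj v) = cinner (vconj u) (vconj v)"
    by (simp add: cinner_matrix_left matrix_vector_mul_assoc assms)
  then show ?thesis by (simp only: cinner_vconj cinner_commute[of v u])
qed

lemma norm_antiunitary:
  assumes "cadj B ** B = mat 1"
  shows "norm (B *v vconj v) = norm v"
proof -
  have "(norm (B *v vconj v))\<^sup>2 = (norm v)\<^sup>2"
    using cinner_antiunitary[OF assms, of v v] by (simp only: cinner_self_eq_norm of_real_eq_iff)
  then show ?thesis by (simp add: power2_eq_iff_nonneg)
qed

lemma antiunitary_involution:
  assumes "cadj B ** B = mat 1" and "\<And>v. B *v vconj v = vconj (cadj B *v v)"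
  shows "B *v vconj (B *v vconj v) = v"
proof -
  have "B ** cadj B = mat 1" using assms(1) matrix_left_right_inverse by blast
  then show ?thesis by (simp add: assms(2) matrix_vector_mul_assoc)
qed

lemma cinner_bog_self:
  fixes u :: "complex ^ 'N"
  assumes "cadj B ** B = mat 1"
  defines "w \<equiv> B *v vconj u"
  shows "cinner (a *s u + b *s w) (a *s u + b *s w)
    = complex_of_real ((cmod a)\<^sup>2 + (cmod b)\<^sup>2) * cinner u u
      + cnj a * b * cinner u w + cnj (cnj a * b * cinner u w)"
proof -
  have "cinner (a *s u + b *s w) (a *s u + b *s w)
     = cnj a * (a * cinner u u + b * cinner u w) + cnj b * (a * cinner w u + b * cinner w w)"
    by (simp add: cinner_add_scalar_left cinner_add_scalar_right algebra_simps)
  also have "\<dots> = (cnj a * a + cnj b * b) * cinner u u + cnj a * b * cinner u w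
      + cnj (cnj a * b * cinner u w)"
    unfolding w_def cinner_antiunitary[OF assms(1)] cinner_commute[of "B *v vconj u" u]
    by (simp add: algebra_simps)
  also have "cnj a * a + cnj b * b = complex_of_real ((cmod a)\<^sup>2 + (cmod b)\<^sup>2)"
    unfolding of_real_add complex_norm_square by (simp add: mult.commute)
  finally show ?thesis .
qed

lemma cinner_bog_antiunitary:
  fixes u :: "complex ^ 'N"
  assumes "cadj B ** B = mat 1" and "\<And>v. B *v vconj v = vconj (cadj B *v v)"
  defines "w \<equiv> B *v vconj u"
  shows "cinner (a *s u + b *s w) (B *v vconj (a *s u + b *s w))
    = (cnj a)\<^sup>2 * cinner u w + 2 * cnj a * cnj b * cinner u u + (cnj b)\<^sup>2 * cnj (cinner u w)"
proof -
  have "B *v vconj (a *s u + b *s w) = cnj a *s w + cnj b *s u"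
    unfolding matrix_vconj_add_scalar w_def antiunitary_involution[OF assms(1,2)] ..
  then have "cinner (a *s u + b *s w) (B *v vconj (a *s u + b *s w))
     = cnj a * (cnj a * cinner u w + cnj b * cinner u u)
       + cnj b * (cnj a * cinner w w + cnj b * cinner w u)"
    by (simp add: cinner_add_scalar_left cinner_add_scalar_right algebra_simps)
  then show ?thesis
    unfolding w_def cinner_antiunitary[OF assms(1)] cinner_commute[of "B *v vconj u" u]
    by (simp add: algebra_simps power2_eq_square)
qed

lemma cmod_cinner_le: "cmod (cinner u v) \<le> real CARD('N) * ((norm u)\<^sup>2 + (norm v)\<^sup>2)"
  for u v :: "complex ^ 'N::finite"
proof -
  have "cmod (cinner u v) \<le> (\<Sum>i\<in>UNIV. cmod (u$i) * cmod (v$i))"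
    unfolding cinner_def using norm_sum[of "\<lambda>i. cnj (u$i) * v$i" UNIV] by (simp add: norm_mult)
  also have "\<dots> \<le> (\<Sum>i\<in>(UNIV::'N set). (norm u)\<^sup>2 + (norm v)\<^sup>2)"
  proof (rule sum_mono)
    fix i
    have "cmod (u$i) * cmod (v$i) \<le> norm u * norm v"
      by (intro mult_mono Finite_Cartesian_Product.norm_nth_le) auto
    also have "\<dots> \<le> (norm u)\<^sup>2 + (norm v)\<^sup>2"
      using sum_squares_bound[of "norm u" "norm v"] mult_nonneg_nonneg[OF norm_ge_zero norm_ge_zero, of u v]
      by linarith
    finally show "cmod (u$i) * cmod (v$i) \<le> (norm u)\<^sup>2 + (norm v)\<^sup>2" .
  qed
  finally show ?thesis by simp
qed

lemma borel_measurable_antiunitary: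
  fixes f :: "'a \<Rightarrow> complex ^ 'N::finite"
  assumes "f \<in> borel_measurable M"
  shows "(\<lambda>x. B *v vconj (f x)) \<in> borel_measurable M"
proof -
  have "continuous_on UNIV (\<lambda>v::complex^'N. (\<chi> i. \<Sum>j\<in>UNIV. B$i$j * cnj (v$j)))"
    by (intro continuous_intros)
  from borel_measurable_continuous_on[OF this assms] show ?thesis
    by (simp add: matrix_vector_mult_def vconj_def)
qed

lemma borel_measurable_cinner:
  fixes f g :: "'a \<Rightarrow> complex ^ 'N::finite"
  assumes "f \<in> borel_measurable M" "g \<in> borel_measurable M"
  shows "(\<lambda>x. cinner (f x) (g x)) \<in> borel_measurable M"
proof -
  have "continuous_on UNIV (\<lambda>p::(complex^'N) \<times> (complex^'N). \<Sum>i\<in>UNIV. cnj (fst p $ i) * snd p $ i)"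
    by (intro continuous_intros)
  from borel_measurable_continuous_on[OF this borel_measurable_Pair[OF assms]] show ?thesis
    unfolding cinner_def by simp
qed

lemma integrable_cinner:
  fixes f g :: "'a \<Rightarrow> complex ^ 'N::finite"
  assumes "f \<in> borel_measurable M" "g \<in> borel_measurable M"
    and "integrable M (\<lambda>x. (norm (f x))\<^sup>2)" "integrable M (\<lambda>x. (norm (g x))\<^sup>2)"
  shows "integrable M (\<lambda>x. cinner (f x) (g x))"
proof (rule Bochner_Integration.integrable_bound)
  show "integrable M (\<lambda>x. real CARD('N) * ((norm (f x))\<^sup>2 + (norm (g x))\<^sup>2))"
    using assms(3,4) by (intro integrable_mult_right Bochner_Integration.integrable_add)
  show "(\<lambda>x. cinner (f x) (g x)) \<in> borel_measurable M"
    using borel_measurable_cinner[OF assms(1,2)] .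
  show "AE x in M. norm (cinner (f x) (g x))
      \<le> norm (real CARD('N) * ((norm (f x))\<^sup>2 + (norm (g x))\<^sup>2))"
    using cmod_cinner_le by (intro AE_I2) (simp add: abs_of_nonneg)
qed

lemma integrable_cinner_L2:
  assumes "L2 \<psi>" "cadj B ** B = mat 1"
  shows "integrable lborel (\<lambda>x. cinner (\<psi> x) (\<psi> x))"
    and "integrable lborel (\<lambda>x. cinner (\<psi> x) (BK B \<psi> x))"
proof -
  have m: "\<psi> \<in> borel_measurable lborel" and i: "integrable lborel (\<lambda>x. (norm (\<psi> x))\<^sup>2)"
    using assms(1) unfolding L2_def by auto
  show "integrable lborel (\<lambda>x. cinner (\<psi> x) (\<psi> x))"
    by (rule integrable_cinner[OF m m i i])
  show "integrable lborel (\<lambda>x. cinner (\<psi> x) (BK B \<psi> x))"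
    unfolding BK_def
    by (rule integrable_cinner[OF m borel_measurable_antiunitary[OF m] i])
       (simp add: norm_antiunitary[OF assms(2)] i)
qed

lemma Qf_real: "Qf \<psi> = complex_of_real (LINT x|lborel. (norm (\<psi> x))\<^sup>2)"
  unfolding Qf_def cinner_self_eq_norm by (rule integral_complex_of_real)

lemma Qf_bog:
  assumes "L2 \<psi>" "cadj B ** B = mat 1"
  shows "Qf (bog a b B \<psi>) = complex_of_real ((cmod a)\<^sup>2 + (cmod b)\<^sup>2) * Qf \<psi>
           + complex_of_real (2 * Re (cnj a * b * Lam B \<psi>))"
proof -
  have "Qf (bog a b B \<psi>) = complex_of_real ((cmod a)\<^sup>2 + (cmod b)\<^sup>2) * Qf \<psi>
      + (cnj a * b * Lam B \<psi> + cnj (cnj a * b * Lam B \<psi>))"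
    unfolding Qf_def Lam_def bog_def
    using integrable_cinner_L2[OF assms]
    by (simp add: BK_def cinner_bog_self[OF assms(2)])
  then show ?thesis by (simp only: complex_add_cnj)
qed

lemma Lam_bog:
  assumes "L2 \<psi>" "cadj B ** B = mat 1" and "\<And>v. B *v vconj v = vconj (cadj B *v v)"
  shows "Lam B (bog a b B \<psi>) = (cnj a)\<^sup>2 * Lam B \<psi> + 2 * cnj a * cnj b * Qf \<psi>
           + (cnj b)\<^sup>2 * cnj (Lam B \<psi>)"
  unfolding Qf_def Lam_def bog_def
  using integrable_cinner_L2[OF assms(1,2)]
  by (simp add: BK_def cinner_bog_antiunitary[OF assms(2,3)])

lemma bogoliubov_quadratic_form_scaling:
  fixes a b L :: complex and q :: real
  shows "(((cmod a)\<^sup>2 + (cmod b)\<^sup>2) * q + 2 * Re (cnj a * b * L))\<^sup>2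
     - (cmod ((cnj a)\<^sup>2 * L + 2 * cnj a * cnj b * complex_of_real q + (cnj b)\<^sup>2 * cnj L))\<^sup>2
     = ((cmod a)\<^sup>2 - (cmod b)\<^sup>2)\<^sup>2 * (q\<^sup>2 - (cmod L)\<^sup>2)"
proof -
  obtain a1 a2 b1 b2 l1 l2
    where "a = Complex a1 a2" and "b = Complex b1 b2" and "L = Complex l1 l2"
    by (metis complex.exhaust)
  then show ?thesis unfolding cmod_power2 by (simp add: power2_eq_square algebra_simps)
qed

theorem lemma2p8:
  fixes \<alpha> :: "'n::finite \<Rightarrow> complex ^ 'N::finite ^ 'N"
    and \<beta> B :: "complex ^ 'N ^ 'N"
    and m :: real and a b :: complex
    and \<psi> :: "real ^ 'n \<Rightarrow> complex ^ 'N"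
  assumes N_even: "even CARD('N)" and N_ge2: "CARD('N) \<ge> 2"
    and m_pos: "m > 0"
    and alpha_sa: "\<And>j. cadj (\<alpha> j) = \<alpha> j"
    and beta_sa: "cadj \<beta> = \<beta>"
    and alpha_sq: "\<And>j. \<alpha> j ** \<alpha> j = mat 1"
    and beta_sq: "\<beta> ** \<beta> = mat 1"
    and alpha_anti: "\<And>j k. j \<noteq> k \<Longrightarrow> \<alpha> j ** \<alpha> k + \<alpha> k ** \<alpha> j = 0"
    and alpha_beta_anti: "\<And>j. \<alpha> j ** \<beta> + \<beta> ** \<alpha> j = 0"
    and BK_D_anti: "\<And>\<phi>. (\<forall>x. \<phi> differentiable (at x)) \<Longrightarrow>
         (\<forall>x. BK B (dirac \<alpha> \<beta> m \<phi>) x + dirac \<alpha> \<beta> m (BK B \<phi>) x = 0)"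
    and BK_KBstar: "\<And>v. B *v vconj v = vconj (cadj B *v v)"
    and B_unitary: "cadj B ** B = mat 1"
    and ab: "(cmod a)\<^sup>2 - (cmod b)\<^sup>2 = 1"
    and psi_L2: "L2 \<psi>"
  shows "(Qf (bog a b B \<psi>) = complex_of_real ((cmod a)\<^sup>2 + (cmod b)\<^sup>2) * Qf \<psi>
            + complex_of_real (2 * Re (cnj a * b * Lam B \<psi>)))
    \<and> (Lam B (bog a b B \<psi>) = (cnj a)\<^sup>2 * Lam B \<psi> + 2 * cnj a * cnj b * Qf \<psi>
            + (cnj b)\<^sup>2 * cnj (Lam B \<psi>))
    \<and> ((Qf (bog a b B \<psi>))\<^sup>2 - complex_of_real ((cmod (Lam B (bog a b B \<psi>)))\<^sup>2)
            = (Qf \<psi>)\<^sup>2 - complex_of_real ((cmod (Lam B \<psi>))\<^sup>2))"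
proof -
  note Q = Qf_bog[OF psi_L2 B_unitary, of a b]
  note L = Lam_bog[OF psi_L2 B_unitary BK_KBstar, of a b]
  define q where "q = (LINT x|lborel. (norm (\<psi> x))\<^sup>2)"
  have "(Qf (bog a b B \<psi>))\<^sup>2 - complex_of_real ((cmod (Lam B (bog a b B \<psi>)))\<^sup>2)
      = complex_of_real ((((cmod a)\<^sup>2 + (cmod b)\<^sup>2) * q + 2 * Re (cnj a * b * Lam B \<psi>))\<^sup>2
          - (cmod ((cnj a)\<^sup>2 * Lam B \<psi> + 2 * cnj a * cnj b * complex_of_real q
              + (cnj b)\<^sup>2 * cnj (Lam B \<psi>)))\<^sup>2)"
    unfolding Q L unfolding Qf_real q_def[symmetric] by simp
  also have "\<dots> = (Qf \<psi>)\<^sup>2 - complex_of_real ((cmod (Lam B \<psi>))\<^sup>2)"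
    unfolding bogoliubov_quadratic_form_scaling ab Qf_real q_def[symmetric] by simp
  finally show ?thesis using Q L by blast
qed

end
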